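(* For the hypergeometric moment matrix $\mathscr M$ described in the context, for $a\in\{1,2\}$, $i\in\{1,\dots,M^{(a)}\}$ and $j\in\{1,\dots,N\}$, \[ \mathscr M{\Lambda^{(a)}}^\top+b^{(a)}_i\mathscr M=b^{(a)}_i\,{}_i\Theta^{(a)}\mathscr M,\qquad \mathscr M(\Lambda^2)^\top+(c_j-1)\mathscr M=(c_j-1)\,\Theta_j\mathscr M. \]
   Context: Fix parameters $b^{(a)}_i$, $c_j$, $\eta^{(a)}$ and the weights $w^{(a)}(k)=\frac{(b^{(a)}_1)_k\cdots(b^{(a)}_{M^{(a)}})_k}{(c_1)_k\cdots(c_N)_k}\frac{(\eta^{(a)})^k}{k!}$ on $\mathbb N_0$, $a\in\{1,2\}$, with all series below convergent. The moment matrix $\mathscr M$ (indices from 0) has entries $\mathscr M_{n,2m}=\sum_k k^{n+m}w^{(1)}(k)$, $\mathscr M_{n,2m+1}=\sum_k k^{n+m}w^{(2)}(k)$, regarded as a function of the parameters. $\Lambda$ has ones on the first superdiagonal, $I^{(1)}=\operatorname{diag}(1,0,1,0,\dots)$, $I^{(2)}=\operatorname{diag}(0,1,0,1,\dots)$, $\Lambda^{(a)}=\Lambda^2I^{(a)}$. The operator ${}_i\Theta^{(a)}$ replaces the parameter $b^{(a)}_i$ by $b^{(a)}_i+1$ (other parameters fixed), and $\Theta_j$ replaces $c_j$ by $c_j-1$. *)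

theory Defs
  imports "HOL-Analysis.Analysis"
begin

text \<open>Parameters: b a i = b^(a)_i (a in {1,2}, i in {1..Mp a}), c j = c_j (j in {1..N}),
  eta a = eta^(a). All parameters are complex numbers.\<close>

definition hw :: "(nat \<Rightarrow> complex) \<Rightarrow> nat \<Rightarrow> (nat \<Rightarrow> complex) \<Rightarrow> nat \<Rightarrow> complex \<Rightarrow> nat \<Rightarrow> complex" where
  "hw bs Mb cs N eta k =
     (\<Prod>i=1..Mb. pochhammer (bs i) k) / (\<Prod>j=1..N. pochhammer (cs j) k)
     * eta ^ k / of_nat (fact k)"

definition wgt :: "(nat \<Rightarrow> nat \<Rightarrow> complex) \<Rightarrow> (nat \<Rightarrow> nat) \<Rightarrow> (nat \<Rightarrow> complex) \<Rightarrow> nat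
                   \<Rightarrow> (nat \<Rightarrow> complex) \<Rightarrow> nat \<Rightarrow> nat \<Rightarrow> complex" where
  "wgt b Mp c N eta a k = hw (b a) (Mp a) c N (eta a) k"

definition moment :: "(nat \<Rightarrow> nat \<Rightarrow> complex) \<Rightarrow> (nat \<Rightarrow> nat) \<Rightarrow> (nat \<Rightarrow> complex) \<Rightarrow> nat
                   \<Rightarrow> (nat \<Rightarrow> complex) \<Rightarrow> nat \<Rightarrow> nat \<Rightarrow> complex" where
  "moment b Mp c N eta n m =
     (if even m
      then (\<Sum>\<^sub>\<infinity>k. of_nat k ^ (n + m div 2) * wgt b Mp c N eta 1 k)
      else (\<Sum>\<^sub>\<infinity>k. of_nat k ^ (n + m div 2) * wgt b Mp c N eta 2 k))"

definition moments_converge :: "(nat \<Rightarrow> nat \<Rightarrow> complex) \<Rightarrow> (nat \<Rightarrow> nat) \<Rightarrow> (nat \<Rightarrow> complex) \<Rightarrow> nat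
                   \<Rightarrow> (nat \<Rightarrow> complex) \<Rightarrow> bool" where
  "moments_converge b Mp c N eta \<longleftrightarrow>
     (\<forall>a\<in>{1,2}. \<forall>n. (\<lambda>k. of_nat k ^ n * wgt b Mp c N eta a k) summable_on UNIV)"

definition shift_b :: "nat \<Rightarrow> nat \<Rightarrow> (nat \<Rightarrow> nat \<Rightarrow> complex) \<Rightarrow> (nat \<Rightarrow> nat \<Rightarrow> complex)" where
  "shift_b a i b = b(a := (b a)(i := b a i + 1))"

definition shift_c :: "nat \<Rightarrow> (nat \<Rightarrow> complex) \<Rightarrow> (nat \<Rightarrow> complex)" where
  "shift_c j c = c(j := c j - 1)"

type_synonym mat = "nat \<Rightarrow> nat \<Rightarrow> complex"

definition mmul :: "mat \<Rightarrow> mat \<Rightarrow> mat" where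
  "mmul A B = (\<lambda>n m. \<Sum>\<^sub>\<infinity>l. A n l * B l m)"

definition madd :: "mat \<Rightarrow> mat \<Rightarrow> mat" where
  "madd A B = (\<lambda>n m. A n m + B n m)"

definition msc :: "complex \<Rightarrow> mat \<Rightarrow> mat" where
  "msc s A = (\<lambda>n m. s * A n m)"

definition mtr :: "mat \<Rightarrow> mat" where
  "mtr A = (\<lambda>n m. A m n)"

definition Lam :: mat where
  "Lam = (\<lambda>r s. if s = Suc r then 1 else 0)"

definition Idg :: "nat \<Rightarrow> mat" where
  "Idg a = (\<lambda>r s. if r = s \<and> (if a = 1 then even r else odd r) then 1 else 0)"

definition LamA :: "nat \<Rightarrow> mat" where
  "LamA a = mmul (mmul Lam Lam) (Idg a)"

end

theory Submission
  imports Defs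
begin

text \<open>Both relations hold column by column and, inside each moment series, term by term.
  Raising \<open>b\<^sub>i\<close> by one multiplies the weight by \<open>(b\<^sub>i + k) / b\<^sub>i\<close> and lowering \<open>c\<^sub>j\<close>
  by one multiplies it by \<open>(c\<^sub>j - 1 + k) / (c\<^sub>j - 1)\<close>, both because
  \<open>z (z + 1)\<^sub>k = (z + k) (z)\<^sub>k\<close>. Multiplying the moment matrix from the right by the transpose
  of \<open>\<Lambda>\<^sup>2\<close> shifts columns by two, i.e. multiplies the weight by \<open>k\<close>; the factor \<open>I\<^sup>(\<^sup>a\<^sup>)\<close>
  keeps this shift only in the columns built from \<open>w\<^sup>(\<^sup>a\<^sup>)\<close>, the only weight that depends
  on \<open>b\<^sup>(\<^sup>a\<^sup>)\<^sub>i\<close>.\<close>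

lemma pochhammer_shift_one:
  "z * pochhammer (z + 1) n = (z + of_nat n) * pochhammer z n"
  using pochhammer_rec[of z n] pochhammer_rec'[of z n] by simp

lemma hw_shift_numerator:
  assumes "i \<in> {1..Mb}"
  shows "bs i * hw (bs(i := bs i + 1)) Mb cs N eta k = (bs i + of_nat k) * hw bs Mb cs N eta k"
proof -
  define R where "R = (\<Prod>i'\<in>{1..Mb} - {i}. pochhammer (bs i') k)"
  define D where "D = (\<Prod>j=1..N. pochhammer (cs j) k) * of_nat (fact k)"
  have shifted: "(\<Prod>i'=1..Mb. pochhammer ((bs(i := bs i + 1)) i') k) = pochhammer (bs i + 1) k * R"
    unfolding R_def using assms by (simp add: prod.remove)
  have unshifted: "(\<Prod>i'=1..Mb. pochhammer (bs i') k) = pochhammer (bs i) k * R"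
    unfolding R_def using assms by (simp add: prod.remove)
  have "bs i * hw (bs(i := bs i + 1)) Mb cs N eta k = bs i * pochhammer (bs i + 1) k * R * eta ^ k / D"
    unfolding hw_def shifted D_def by simp
  also have "\<dots> = (bs i + of_nat k) * pochhammer (bs i) k * R * eta ^ k / D"
    by (simp only: pochhammer_shift_one)
  also have "\<dots> = (bs i + of_nat k) * hw bs Mb cs N eta k"
    unfolding hw_def unshifted D_def by simp
  finally show ?thesis .
qed

lemma hw_shift_denominator:
  assumes "j \<in> {1..N}" and "pochhammer (cs j) k \<noteq> 0" and "pochhammer (cs j - 1) k \<noteq> 0"
  shows "(cs j - 1) * hw bs Mb (cs(j := cs j - 1)) N eta k
           = (cs j - 1 + of_nat k) * hw bs Mb cs N eta k"
proof -
  define R where "R = (\<Prod>j'\<in>{1..N} - {j}. pochhammer (cs j') k)"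
  define T where "T = (\<Prod>i=1..Mb. pochhammer (bs i) k) * eta ^ k / of_nat (fact k)"
  have shifted: "(\<Prod>j'=1..N. pochhammer ((cs(j := cs j - 1)) j') k) = pochhammer (cs j - 1) k * R"
    unfolding R_def using assms(1) by (simp add: prod.remove)
  have unshifted: "(\<Prod>j'=1..N. pochhammer (cs j') k) = pochhammer (cs j) k * R"
    unfolding R_def using assms(1) by (simp add: prod.remove)
  have factor: "(cs j - 1) / pochhammer (cs j - 1) k = (cs j - 1 + of_nat k) / pochhammer (cs j) k"
    using pochhammer_shift_one[of "cs j - 1" k] assms(2,3) by (simp add: field_simps)
  have "(cs j - 1) * hw bs Mb (cs(j := cs j - 1)) N eta k
          = (cs j - 1) / pochhammer (cs j - 1) k * (T / R)"
    unfolding hw_def shifted T_def by (simp add: field_simps)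
  also have "\<dots> = (cs j - 1 + of_nat k) / pochhammer (cs j) k * (T / R)"
    by (simp only: factor)
  also have "\<dots> = (cs j - 1 + of_nat k) * hw bs Mb cs N eta k"
    unfolding hw_def unshifted T_def by (simp add: field_simps)
  finally show ?thesis .
qed

lemma infsum_delta:
  "(\<Sum>\<^sub>\<infinity>x. if x = y then g else 0) = (g :: 'b::{topological_comm_monoid_add, t2_space})"
proof -
  have "(\<Sum>\<^sub>\<infinity>x. if x = y then g else 0) = (\<Sum>\<^sub>\<infinity>x\<in>{y}. if x = y then g else 0)"
    by (rule infsum_cong_neutral) auto
  then show ?thesis by simp
qed

lemma infsum_contiguity:
  fixes w w' :: "nat \<Rightarrow> complex"
  assumes "\<And>q. (\<lambda>k. of_nat k ^ q * w k) summable_on UNIV"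
    and "\<And>k. s * w' k = (s + of_nat k) * w k"
  shows "(\<Sum>\<^sub>\<infinity>k. of_nat k ^ Suc p * w k) + s * (\<Sum>\<^sub>\<infinity>k. of_nat k ^ p * w k)
           = s * (\<Sum>\<^sub>\<infinity>k. of_nat k ^ p * w' k)"
proof -
  have "(\<Sum>\<^sub>\<infinity>k. of_nat k ^ Suc p * w k) + s * (\<Sum>\<^sub>\<infinity>k. of_nat k ^ p * w k)
          = (\<Sum>\<^sub>\<infinity>k. of_nat k ^ Suc p * w k + s * (of_nat k ^ p * w k))"
    using infsum_add[OF assms(1)[of "Suc p"] summable_on_cmult_right[OF assms(1)[of p], of s]]
    by (simp add: infsum_cmult_right')
  also have "\<dots> = (\<Sum>\<^sub>\<infinity>k. s * (of_nat k ^ p * w' k))"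
  proof (rule infsum_cong)
    fix k
    show "of_nat k ^ Suc p * w k + s * (of_nat k ^ p * w k) = s * (of_nat k ^ p * w' k)"
      using arg_cong[OF assms(2)[of k], of "(*) (of_nat k ^ p)"] by (simp add: algebra_simps)
  qed
  finally show ?thesis by (simp add: infsum_cmult_right')
qed

lemma mmul_mtr_offdiag2:
  "mmul A (mtr (\<lambda>r s. if s = r + 2 \<and> P s then 1 else 0)) n m
     = (if P (m + 2) then A n (m + 2) else 0)"
proof -
  have "mmul A (mtr (\<lambda>r s. if s = r + 2 \<and> P s then 1 else 0)) n m
      = (\<Sum>\<^sub>\<infinity>l. if l = m + 2 then (if P (m + 2) then A n (m + 2) else 0) else 0)"
    unfolding mmul_def mtr_def by (intro infsum_cong) auto
  then show ?thesis by (simp only: infsum_delta)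
qed

lemma Lam_squared: "mmul Lam Lam = (\<lambda>r s. if s = r + 2 then 1 else 0)"
proof (intro ext)
  fix r s
  have "mmul Lam Lam r s = (\<Sum>\<^sub>\<infinity>l. if l = Suc r then (if s = Suc (Suc r) then 1 else 0) else 0)"
    unfolding mmul_def Lam_def by (intro infsum_cong) auto
  then show "mmul Lam Lam r s = (if s = r + 2 then 1 else 0)"
    by (simp add: infsum_delta)
qed

lemma LamA_eq:
  "LamA a = (\<lambda>r s. if s = r + 2 \<and> (if a = 1 then even s else odd s) then 1 else 0)"
proof (intro ext)
  fix r s
  have "LamA a r s = (\<Sum>\<^sub>\<infinity>l. if l = r + 2
          then (if s = r + 2 \<and> (if a = 1 then even s else odd s) then 1 else 0) else 0)"
    unfolding LamA_def Lam_squared by (unfold Idg_def mmul_def) (intro infsum_cong, auto)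
  then show "LamA a r s = (if s = r + 2 \<and> (if a = 1 then even s else odd s) then 1 else 0)"
    by (simp only: infsum_delta)
qed

lemma mmul_mtr_Lam_squared: "mmul A (mtr (mmul Lam Lam)) n m = A n (m + 2)"
  using mmul_mtr_offdiag2[of A "\<lambda>_. True"] by (simp add: Lam_squared)

lemma mmul_mtr_LamA:
  "mmul A (mtr (LamA a)) n m = (if (if a = 1 then even m else odd m) then A n (m + 2) else 0)"
  unfolding LamA_eq mmul_mtr_offdiag2 by simp

lemma moment_eq:
  "moment b Mp c N eta n m
     = (\<Sum>\<^sub>\<infinity>k. of_nat k ^ (n + m div 2) * wgt b Mp c N eta (if even m then 1 else 2) k)"
  unfolding moment_def by simp

lemma moment_add_two:
  "moment b Mp c N eta n (m + 2)
     = (\<Sum>\<^sub>\<infinity>k. of_nat k ^ Suc (n + m div 2) * wgt b Mp c N eta (if even m then 1 else 2) k)"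
  unfolding moment_eq by simp

lemma moment_contiguity_b:
  assumes "a \<in> {1, 2}" and "i \<in> {1..Mp a}" and "moments_converge b Mp c N eta"
  shows "madd (mmul (moment b Mp c N eta) (mtr (LamA a))) (msc (b a i) (moment b Mp c N eta))
           = msc (b a i) (moment (shift_b a i b) Mp c N eta)"
proof (intro ext)
  fix n m :: nat
  define a' :: nat where "a' = (if even m then 1 else 2)"
  define w where "w = wgt b Mp c N eta a'"
  define w' where "w' = wgt (shift_b a i b) Mp c N eta a'"
  have moments: "\<And>q. (\<lambda>k. of_nat k ^ q * w k) summable_on UNIV"
    using assms(3) unfolding moments_converge_def w_def a'_def by simp
  have lhs: "madd (mmul (moment b Mp c N eta) (mtr (LamA a))) (msc (b a i) (moment b Mp c N eta)) n m
      = (if a' = a then (\<Sum>\<^sub>\<infinity>k. of_nat k ^ Suc (n + m div 2) * w k) else 0)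
        + b a i * (\<Sum>\<^sub>\<infinity>k. of_nat k ^ (n + m div 2) * w k)"
    using assms(1) unfolding madd_def msc_def mmul_mtr_LamA moment_add_two
    by (auto simp: moment_eq w_def a'_def)
  have rhs: "msc (b a i) (moment (shift_b a i b) Mp c N eta) n m
      = b a i * (\<Sum>\<^sub>\<infinity>k. of_nat k ^ (n + m div 2) * w' k)"
    unfolding msc_def moment_eq w'_def a'_def by simp
  show "madd (mmul (moment b Mp c N eta) (mtr (LamA a))) (msc (b a i) (moment b Mp c N eta)) n m
      = msc (b a i) (moment (shift_b a i b) Mp c N eta) n m"
  proof (cases "a' = a")
    case True
    have "b a i * w' k = (b a i + of_nat k) * w k" for k
      using hw_shift_numerator[OF assms(2)] True
      unfolding w_def w'_def wgt_def shift_b_def by simp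
    then show ?thesis
      unfolding lhs rhs using True infsum_contiguity[OF moments] by simp
  next
    case False
    then have "w' = w"
      unfolding w_def w'_def wgt_def shift_b_def by simp
    then show ?thesis
      unfolding lhs rhs using False by simp
  qed
qed

lemma moment_contiguity_c:
  assumes "j \<in> {1..N}" and "\<forall>k::nat. c j \<noteq> - of_nat k" and "\<forall>k::nat. c j - 1 \<noteq> - of_nat k"
    and "moments_converge b Mp c N eta"
  shows "madd (mmul (moment b Mp c N eta) (mtr (mmul Lam Lam))) (msc (c j - 1) (moment b Mp c N eta))
           = msc (c j - 1) (moment b Mp (shift_c j c) N eta)"
proof (intro ext)
  fix n m :: nat
  define a' :: nat where "a' = (if even m then 1 else 2)"
  define w where "w = wgt b Mp c N eta a'"
  define w' where "w' = wgt b Mp (shift_c j c) N eta a'"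
  have moments: "\<And>q. (\<lambda>k. of_nat k ^ q * w k) summable_on UNIV"
    using assms(4) unfolding moments_converge_def w_def a'_def by simp
  have "(c j - 1) * w' k = (c j - 1 + of_nat k) * w k" for k
    using hw_shift_denominator[OF assms(1)] assms(2,3)
    unfolding w_def w'_def wgt_def shift_c_def by (simp add: pochhammer_eq_0_iff)
  then show "madd (mmul (moment b Mp c N eta) (mtr (mmul Lam Lam))) (msc (c j - 1) (moment b Mp c N eta)) n m
      = msc (c j - 1) (moment b Mp (shift_c j c) N eta) n m"
    unfolding madd_def msc_def mmul_mtr_Lam_squared moment_add_two
    using infsum_contiguity[OF moments] by (simp add: moment_eq w_def w'_def a'_def)
qed

theorem mainTheorem8:
  fixes b :: "nat \<Rightarrow> nat \<Rightarrow> complex" and Mp :: "nat \<Rightarrow> nat"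
    and c :: "nat \<Rightarrow> complex" and N :: nat and eta :: "nat \<Rightarrow> complex"
    and a i j :: nat
  assumes "a \<in> {1, 2}" and "i \<in> {1..Mp a}" and "j \<in> {1..N}"
    and "\<forall>j'\<in>{1..N}. \<forall>k::nat. c j' \<noteq> - of_nat k"
    and "\<forall>k::nat. c j - 1 \<noteq> - of_nat k"
    and "moments_converge b Mp c N eta"
    and "moments_converge (shift_b a i b) Mp c N eta"
    and "moments_converge b Mp (shift_c j c) N eta"
  shows "madd (mmul (moment b Mp c N eta) (mtr (LamA a))) (msc (b a i) (moment b Mp c N eta))
           = msc (b a i) (moment (shift_b a i b) Mp c N eta)
       \<and> madd (mmul (moment b Mp c N eta) (mtr (mmul Lam Lam))) (msc (c j - 1) (moment b Mp c N eta))
           = msc (c j - 1) (moment b Mp (shift_c j c) N eta)"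
  using moment_contiguity_b[OF assms(1,2,6)] moment_contiguity_c[OF assms(3) _ assms(5,6)] assms(3,4)
  by blast

end
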